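(* For every $\varepsilon>0$ there exists $N$ such that for all $n\ge N$, every trifferent code $\mathcal C\subseteq\{0,1,2\}^n$ satisfies $|\mathcal C|\le(1+\varepsilon)\left(\tfrac32\right)^n$; i.e. $|\mathcal C|\le(1+o(1))(3/2)^n$.
   Context: Three distinct strings $x,y,z\in\{0,1,2\}^n$ are trifferent if there is a coordinate $i\in[n]$ with $x_i,y_i,z_i$ mutually distinct. A trifferent code of block length $n$ is a subset $\mathcal C\subseteq\{0,1,2\}^n$ in which any three distinct codewords are trifferent. *)

theory Defs
  imports Complex_Main "HOL-Library.FuncSet"
begin

text \<open>Strings in {0,1,2}^n are modelled as extensional functions from {0..<n} to {0,1,2}
  (value undefined outside {0..<n}).\<close>

definition ternary_strings :: "nat \<Rightarrow> (nat \<Rightarrow> nat) set" where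
  "ternary_strings n = PiE {0..<n} (\<lambda>_. {0,1,2})"

definition trifferent :: "nat \<Rightarrow> (nat \<Rightarrow> nat) \<Rightarrow> (nat \<Rightarrow> nat) \<Rightarrow> (nat \<Rightarrow> nat) \<Rightarrow> bool" where
  "trifferent n x y z \<longleftrightarrow> (\<exists>i<n. x i \<noteq> y i \<and> y i \<noteq> z i \<and> x i \<noteq> z i)"

definition trifferent_code :: "nat \<Rightarrow> (nat \<Rightarrow> nat) set \<Rightarrow> bool" where
  "trifferent_code n C \<longleftrightarrow> C \<subseteq> ternary_strings n \<and>
     (\<forall>x\<in>C. \<forall>y\<in>C. \<forall>z\<in>C. x \<noteq> y \<and> y \<noteq> z \<and> x \<noteq> z \<longrightarrow> trifferent n x y z)"

end

theory Submission
  imports Defs "HOL-Combinatorics.Multiset_Permutations" "HOL-Real_Asymp.Real_Asymp"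
begin

(*
  Call a string uncovered if no codeword differs from it in every coordinate. In a trifferent
  code every string is avoided in this sense by at most two codewords, so counting the avoiding
  codewords and the ordered pairs of them gives
    2 |C| 2^n + 2 U = 2 * 3^n + (sum over ordered pairs x ~= y in C of 2^agr(x,y)),
  where U is the number of uncovered strings and agr(x,y) the number of coordinates on which
  x and y agree. Dropping U gives Elias' bound |C| <= 2 (3/2)^n. To remove the factor 2,
  uncovered strings are charged to pairs: along an ordering of the coordinates the pair (x,y)
  is charged 2^agr ((3/2)^L - 1) uncovered strings, L the length of the initial run of
  coordinates on which x and y agree, and no string is charged to more than two ordered pairs.
  Averaged over all orderings the charge of (x,y) is 2^agr (E - 1), where E = E(agr,dist) is
  the mean of (3/2)^L, so a factor 2 - E per pair remains. For a parameter t this factor is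
  O(t/n) unless dist >= agr + 2t, and the total weight of these far pairs is small by a tilted
  Elias bound, i.e. Elias' bound averaged over random restrictions of the coordinates.
*)

definition trits :: "nat set" where
  "trits = {0, 1, 2}"

lemma finite_trits [simp]: "finite trits"
  by (simp add: trits_def)

lemma card_trits [simp]: "card trits = 3"
  by (simp add: trits_def)

lemma card_trits_Diff_pair:
  "a \<in> trits \<Longrightarrow> b \<in> trits \<Longrightarrow> card (trits - {a, b}) = (if a = b then 2 else 1)"
  unfolding trits_def by (elim insertE; simp add: insert_Diff_if)

lemma trits_pigeonhole:
  "a \<in> trits \<Longrightarrow> b \<in> trits \<Longrightarrow> c \<in> trits \<Longrightarrow> d \<in> trits \<Longrightarrow> a \<noteq> b \<Longrightarrow> a \<noteq> c \<Longrightarrow> b \<noteq> c \<Longrightarrow>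
    d \<in> {a, b, c}"
  unfolding trits_def by (elim insertE; simp)+

lemma third_trit:
  assumes "a \<in> trits" "b \<in> trits" "a \<noteq> b"
  shows "3 - a - b \<in> trits" "3 - a - b \<noteq> a" "3 - a - b \<noteq> b"
  using assms unfolding trits_def by (elim insertE; simp)+

lemma eq_third_trit:
  "a \<in> trits \<Longrightarrow> b \<in> trits \<Longrightarrow> c \<in> trits \<Longrightarrow> a \<noteq> b \<Longrightarrow> c \<noteq> a \<Longrightarrow> c \<noteq> b \<Longrightarrow> c = 3 - a - b"
  unfolding trits_def by (elim insertE; simp)+

lemma prod_if_eq_power:
  fixes a b :: "'a::comm_monoid_mult"
  assumes "finite A"
  shows "(\<Prod>i\<in>A. if P i then a else b) = a ^ card {i \<in> A. P i} * b ^ card {i \<in> A. \<not> P i}"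
  using assms by (simp add: prod.If_cases Int_def set_diff_eq)

lemma prod_of_bool:
  "finite A \<Longrightarrow> (\<Prod>i\<in>A. of_bool (P i) :: 'a::comm_semiring_1) = of_bool (\<forall>i\<in>A. P i)"
  by (induction A rule: finite_induct) auto

lemma card_filter_add_card_filter_not:
  assumes "finite A"
  shows "card {a \<in> A. P a} + card {a \<in> A. \<not> P a} = card A"
proof -
  have "card ({a \<in> A. P a} \<union> {a \<in> A. \<not> P a}) = card {a \<in> A. P a} + card {a \<in> A. \<not> P a}"
    using assms by (intro card_Un_disjoint) auto
  moreover have "{a \<in> A. P a} \<union> {a \<in> A. \<not> P a} = A"
    by auto
  ultimately show ?thesis
    by simp
qed

lemma set_takeWhile_nested:
  "set (takeWhile P xs) \<subseteq> set (takeWhile Q xs) \<or> set (takeWhile Q xs) \<subseteq> set (takeWhile P xs)"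
  by (induction xs) auto

section \<open>Strings avoided by codewords\<close>

definition trifferent_on :: "'i set \<Rightarrow> ('i \<Rightarrow> nat) set \<Rightarrow> bool" where
  "trifferent_on I W \<longleftrightarrow> (\<forall>x\<in>W. \<forall>y\<in>W. \<forall>z\<in>W. x \<noteq> y \<and> y \<noteq> z \<and> x \<noteq> z \<longrightarrow>
     (\<exists>i\<in>I. x i \<noteq> y i \<and> y i \<noteq> z i \<and> x i \<noteq> z i))"

definition avoiders :: "'i set \<Rightarrow> ('i \<Rightarrow> nat) set \<Rightarrow> ('i \<Rightarrow> nat) \<Rightarrow> ('i \<Rightarrow> nat) set" where
  "avoiders I W s = {z \<in> W. \<forall>i\<in>I. z i \<noteq> s i}"

definition uncovered :: "'i set \<Rightarrow> ('i \<Rightarrow> nat) set \<Rightarrow> ('i \<Rightarrow> nat) set" where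
  "uncovered I W = {s \<in> I \<rightarrow>\<^sub>E trits. avoiders I W s = {}}"

definition agreements :: "'i set \<Rightarrow> ('i \<Rightarrow> nat) \<Rightarrow> ('i \<Rightarrow> nat) \<Rightarrow> nat" where
  "agreements I x y = card {i \<in> I. x i = y i}"

definition hamming_dist :: "'i set \<Rightarrow> ('i \<Rightarrow> nat) \<Rightarrow> ('i \<Rightarrow> nat) \<Rightarrow> nat" where
  "hamming_dist I x y = card {i \<in> I. x i \<noteq> y i}"

lemma agreements_add_hamming_dist:
  "finite I \<Longrightarrow> agreements I x y + hamming_dist I x y = card I"
  unfolding agreements_def hamming_dist_def by (rule card_filter_add_card_filter_not)

lemma PiE_filter_values:
  "{s \<in> Pi\<^sub>E I A. \<forall>i\<in>I. P i (s i)} = (\<Pi>\<^sub>E i\<in>I. {a \<in> A i. P i a})"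
  by (auto simp: PiE_def Pi_def)

lemma card_PiE_trits: "finite I \<Longrightarrow> card (I \<rightarrow>\<^sub>E trits) = 3 ^ card I"
  by (simp add: card_PiE)

lemma card_PiE_avoiding:
  assumes "finite I" "x \<in> I \<rightarrow> trits" "y \<in> I \<rightarrow> trits"
  shows "card {s \<in> I \<rightarrow>\<^sub>E trits. \<forall>i\<in>I. x i \<noteq> s i \<and> y i \<noteq> s i} = 2 ^ agreements I x y"
proof -
  have "{s \<in> I \<rightarrow>\<^sub>E trits. \<forall>i\<in>I. x i \<noteq> s i \<and> y i \<noteq> s i} = (\<Pi>\<^sub>E i\<in>I. trits - {x i, y i})"
    by (subst PiE_filter_values) (auto intro!: PiE_cong)
  moreover have "card (trits - {x i, y i}) = (if x i = y i then 2 else 1)" if "i \<in> I" for i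
    using that assms(2,3) by (intro card_trits_Diff_pair) auto
  ultimately show ?thesis
    using assms(1) by (simp add: card_PiE prod_if_eq_power agreements_def)
qed

lemma sum_card_avoiders:
  assumes "finite I" "finite W" "W \<subseteq> I \<rightarrow> trits"
  shows "(\<Sum>s\<in>I \<rightarrow>\<^sub>E trits. card (avoiders I W s)) = card W * 2 ^ card I"
proof -
  have "card {s \<in> I \<rightarrow>\<^sub>E trits. \<forall>i\<in>I. z i \<noteq> s i} = 2 ^ card I" if "z \<in> W" for z
    using card_PiE_avoiding[OF assms(1), of z z] that assms(3) by (auto simp: agreements_def)
  then show ?thesis
    unfolding avoiders_def using assms(1,2)
    by (subst sum_multicount[where k = "2 ^ card I"]) (auto simp: finite_PiE)
qed

lemma sum_card_avoiders_pairs: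
  assumes "finite I" "finite W" "W \<subseteq> I \<rightarrow> trits"
  shows "(\<Sum>s\<in>I \<rightarrow>\<^sub>E trits. card (avoiders I W s) * (card (avoiders I W s) - 1)) =
    (\<Sum>x\<in>W. \<Sum>y\<in>W - {x}. 2 ^ agreements I x y)"
proof -
  let ?P = "SIGMA x:W. W - {x}"
  let ?both = "\<lambda>s p. fst p \<in> avoiders I W s \<and> snd p \<in> avoiders I W s"
  have "card (avoiders I W s) * (card (avoiders I W s) - 1) = card {p \<in> ?P. ?both s p}" for s
  proof -
    have "{p \<in> ?P. ?both s p} = (SIGMA x:avoiders I W s. avoiders I W s - {x})"
      by (auto simp: avoiders_def)
    then show ?thesis
      using assms(2) by (simp add: avoiders_def)
  qed
  moreover have "card {s \<in> I \<rightarrow>\<^sub>E trits. ?both s p} = 2 ^ agreements I (fst p) (snd p)"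
    if "p \<in> ?P" for p
  proof -
    have "{s \<in> I \<rightarrow>\<^sub>E trits. ?both s p} =
        {s \<in> I \<rightarrow>\<^sub>E trits. \<forall>i\<in>I. fst p i \<noteq> s i \<and> snd p i \<noteq> s i}"
      using that by (auto simp: avoiders_def)
    moreover have "fst p \<in> W" "snd p \<in> W"
      using that by auto
    then have "fst p \<in> I \<rightarrow> trits" "snd p \<in> I \<rightarrow> trits"
      using assms(3) by blast+
    ultimately show ?thesis
      using card_PiE_avoiding[OF assms(1)] by simp
  qed
  then have "(\<Sum>s\<in>I \<rightarrow>\<^sub>E trits. card {p \<in> ?P. ?both s p}) = (\<Sum>p\<in>?P. 2 ^ agreements I (fst p) (snd p))"
    using assms by (intro sum_multicount_gen) (auto simp: finite_PiE)
  ultimately show ?thesis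
    using assms(2) by (simp add: sum.Sigma split_def)
qed

section \<open>Initial runs in random orderings\<close>

(* run_mean q m d is the mean of q^L over all orderings of m marked and d unmarked items, L the
   length of the initial run of marked items; the recursion conditions on the first item. *)
fun run_mean :: "real \<Rightarrow> nat \<Rightarrow> nat \<Rightarrow> real" where
  "run_mean q 0 d = 1"
| "run_mean q (Suc m) d = (q * Suc m * run_mean q m d + d) / (Suc m + d)"

lemma sum_permutations_of_set_Cons:
  assumes "finite S" "S \<noteq> {}"
  shows "(\<Sum>\<pi>\<in>permutations_of_set S. f \<pi>) = (\<Sum>a\<in>S. \<Sum>\<pi>\<in>permutations_of_set (S - {a}). f (a # \<pi>))"
proof -
  have "(\<Sum>\<pi>\<in>permutations_of_set S. f \<pi>) = (\<Sum>a\<in>S. \<Sum>\<pi>\<in>(#) a ` permutations_of_set (S - {a}). f \<pi>)"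
    unfolding permutations_of_set_nonempty[OF assms(2)] using assms(1)
    by (intro sum.UNION_disjoint) auto
  also have "\<dots> = (\<Sum>a\<in>S. \<Sum>\<pi>\<in>permutations_of_set (S - {a}). f (a # \<pi>))"
    by (subst sum.reindex) (auto simp: inj_on_def)
  finally show ?thesis .
qed

lemma sum_permutations_takeWhile_power:
  assumes "finite S"
  shows "(\<Sum>\<pi>\<in>permutations_of_set S. q ^ length (takeWhile P \<pi>)) =
    fact (card S) * run_mean q (card {i \<in> S. P i}) (card {i \<in> S. \<not> P i})"
  using assms
proof (induction "card S" arbitrary: S)
  case 0
  then show ?case
    by simp
next
  case (Suc k)
  let ?m = "card {i \<in> S. P i}" and ?d = "card {i \<in> S. \<not> P i}"
  have S: "finite S" "S \<noteq> {}"
    using Suc by auto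
  have md: "?m + ?d = Suc k"
    using card_filter_add_card_filter_not[OF S(1), of P] Suc.hyps(2) by simp
  have first: "(\<Sum>\<pi>\<in>permutations_of_set (S - {a}). q ^ length (takeWhile P (a # \<pi>))) =
      (if P a then q * (fact k * run_mean q (?m - 1) ?d) else fact k)" if a: "a \<in> S" for a
  proof -
    have k: "card (S - {a}) = k"
      using Suc.hyps(2) a S(1) by simp
    show ?thesis
    proof (cases "P a")
      case True
      have "{i \<in> S - {a}. P i} = {i \<in> S. P i} - {a}" "{i \<in> S - {a}. \<not> P i} = {i \<in> S. \<not> P i}"
        using True by auto
      then show ?thesis
        using Suc.hyps(1)[of "S - {a}"] k S(1) a True by (simp add: sum_distrib_left[symmetric])
    next
      case False
      then show ?thesis
        using k S(1) by simp
    qed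
  qed
  have "(\<Sum>\<pi>\<in>permutations_of_set S. q ^ length (takeWhile P \<pi>)) =
      (\<Sum>a\<in>S. if P a then q * (fact k * run_mean q (?m - 1) ?d) else fact k)"
    using first by (simp add: sum_permutations_of_set_Cons[OF S])
  also have "\<dots> = ?m * (q * (fact k * run_mean q (?m - 1) ?d)) + ?d * fact k"
    using S(1) by (simp add: sum.If_cases Int_def set_diff_eq)
  also have "\<dots> = fact (Suc k) * run_mean q ?m ?d"
  proof (cases ?m)
    case 0
    then show ?thesis
      using md by (simp add: algebra_simps)
  next
    case (Suc m)
    then have "real (Suc k) = Suc m + ?d"
      using md by simp
    then show ?thesis
      using Suc by (simp add: field_simps)
  qed
  finally show ?case
    using Suc.hyps(2) by simp
qed

lemma run_mean_ge_one:
  assumes "1 \<le> q"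
  shows "1 \<le> run_mean q m d"
proof (induction m)
  case (Suc m)
  have "1 * real (Suc m) * 1 \<le> q * Suc m * run_mean q m d"
    using assms Suc.IH by (intro mult_mono) auto
  then show ?case
    by (simp add: field_simps)
qed simp

lemma run_mean_lower_bound:
  fixes m d :: nat
  assumes "m \<le> d + 3"
  shows "(2 * real d + 4) / (2 * real d + 5 - real m) \<le> run_mean (3/2) m d"
  using assms
proof (induction m)
  case 0
  then show ?case
    by (simp add: field_simps)
next
  case (Suc m)
  let ?D = "2 * real d + 5 - real m"
  have pos: "0 < ?D" "0 < real m + 1 + real d" "real m \<le> real d + 2"
    using Suc.prems by auto
  have "(real m + 1 + real d) / ?D = 3/2 * ((2 * real d + 4) / ?D) - 1"
    using pos by (simp add: field_simps)
  also have "\<dots> \<le> 3/2 * run_mean (3/2) m d - 1"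
    using Suc.IH Suc.prems by (intro diff_right_mono mult_left_mono) auto
  finally have step: "(real m + 1 + real d) / ?D \<le> 3/2 * run_mean (3/2) m d - 1" .
  have "(2 * real d + 4) / (2 * real d + 5 - real (Suc m)) = 1 + real m / (2 * real d + 4 - real m)"
    using pos by (simp add: field_simps)
  also have "\<dots> \<le> 1 + (real m + 1) / ?D"
    using pos by (simp add: field_simps)
  also have "(real m + 1) / ?D = (real m + 1) * ((real m + 1 + real d) / ?D) / (real m + 1 + real d)"
    using pos by simp
  also have "\<dots> \<le> (real m + 1) * (3/2 * run_mean (3/2) m d - 1) / (real m + 1 + real d)"
    using step pos by (intro divide_right_mono mult_left_mono) auto
  also have "1 + \<dots> = run_mean (3/2) (Suc m) d"
    using pos by (simp add: field_simps)
  finally show ?case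
    by simp
qed

lemma run_mean_ge_two:
  fixes m d :: nat
  assumes "d + 3 \<le> m"
  shows "2 \<le> run_mean (3/2) m d"
  using assms
proof (induction m rule: dec_induct)
  case base
  have "(2 * real d + 4) / (2 * real d + 5 - real (d + 3)) = 2"
    by (simp add: field_simps)
  then show ?case
    using run_mean_lower_bound[of "d + 3" d] by simp
next
  case (step m)
  have "2 * (Suc m + real d) \<le> 3/2 * Suc m * 2 + d"
    using step.hyps by simp
  also have "\<dots> \<le> 3/2 * Suc m * run_mean (3/2) m d + d"
    using step.IH by (intro add_right_mono mult_left_mono) auto
  finally show ?case
    by (simp add: field_simps)
qed

lemma two_sub_run_mean_le:
  fixes m d t :: nat
  assumes "d < m + 2 * t"
  shows "2 - run_mean (3/2) m d \<le> 8 * (real t + 1) / (real m + real d + 1)"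
proof (cases "d + 3 \<le> m")
  case True
  then have "2 - run_mean (3/2) m d \<le> 0"
    using run_mean_ge_two by simp
  also have "0 \<le> 8 * (real t + 1) / (real m + real d + 1)"
    by simp
  finally show ?thesis .
next
  case False
  let ?D = "2 * real d + 5 - real m"
  have D: "0 < ?D" "real m + real d + 1 \<le> 2 * ?D"
    using False by auto
  have "2 - run_mean (3/2) m d \<le> 2 - (2 * real d + 4) / ?D"
    using run_mean_lower_bound[of m d] False by simp
  also have "\<dots> = 2 * (2 * real d + 6 - 2 * real m) / (2 * ?D)"
    using D by (simp add: field_simps)
  also have "\<dots> \<le> 8 * (real t + 1) / (real m + real d + 1)"
    using assms False D by (intro frac_le) auto
  finally show ?thesis .
qed

section \<open>Charging uncovered strings to pairs\<close>

definition charge_values :: "'i list \<Rightarrow> ('i \<Rightarrow> nat) \<Rightarrow> ('i \<Rightarrow> nat) \<Rightarrow> 'i \<Rightarrow> nat set" where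
  "charge_values \<pi> x y i =
     (if x i \<noteq> y i then {3 - x i - y i}
      else if i \<in> set (takeWhile (\<lambda>j. x j = y j) \<pi>) then trits
      else trits - {x i})"

definition charged :: "'i set \<Rightarrow> 'i list \<Rightarrow> ('i \<Rightarrow> nat) \<Rightarrow> ('i \<Rightarrow> nat) \<Rightarrow> ('i \<Rightarrow> nat) set" where
  "charged I \<pi> x y = {s \<in> (\<Pi>\<^sub>E i\<in>I. charge_values \<pi> x y i). \<exists>i\<in>I. s i = x i}"

lemma charged_third:
  "s \<in> charged I \<pi> x y \<Longrightarrow> i \<in> I \<Longrightarrow> x i \<noteq> y i \<Longrightarrow> s i = 3 - x i - y i"
  by (auto simp: charged_def charge_values_def PiE_iff)

lemma charged_agrees_only_in_run:
  assumes s: "s \<in> charged I \<pi> x y" and i: "i \<in> I" "s i = x i"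
    and xy: "x i \<in> trits" "y i \<in> trits"
  shows "x i = y i" "i \<in> set (takeWhile (\<lambda>j. x j = y j) \<pi>)"
proof -
  have val: "s i \<in> charge_values \<pi> x y i"
    using s i(1) by (auto simp: charged_def)
  show "x i = y i"
  proof (rule ccontr)
    assume "x i \<noteq> y i"
    then show False
      using val i(2) third_trit(2)[OF xy] by (simp add: charge_values_def)
  qed
  then show "i \<in> set (takeWhile (\<lambda>j. x j = y j) \<pi>)"
    using val i(2) by (auto simp: charge_values_def split: if_splits)
qed

lemma charged_subset_strings:
  assumes "x \<in> I \<rightarrow> trits" "y \<in> I \<rightarrow> trits"
  shows "charged I \<pi> x y \<subseteq> I \<rightarrow>\<^sub>E trits"
proof -
  have "charge_values \<pi> x y i \<subseteq> trits" if "i \<in> I" for i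
  proof -
    have "x i \<in> trits" "y i \<in> trits"
      using assms that by auto
    then show ?thesis
      using third_trit(1)[of "x i" "y i"] by (auto simp: charge_values_def)
  qed
  then have "Pi\<^sub>E I (charge_values \<pi> x y) \<subseteq> I \<rightarrow>\<^sub>E trits"
    by (rule PiE_mono)
  then show ?thesis
    by (auto simp: charged_def)
qed

lemma card_charged:
  assumes I: "finite I" and x: "x \<in> I \<rightarrow> trits" and y: "y \<in> I \<rightarrow> trits"
    and \<pi>: "\<pi> \<in> permutations_of_set I"
  shows "real (card (charged I \<pi> x y)) =
    2 ^ agreements I x y * ((3/2) ^ length (takeWhile (\<lambda>i. x i = y i) \<pi>) - 1)"
proof -
  let ?A = "charge_values \<pi> x y" and ?run = "takeWhile (\<lambda>i. x i = y i) \<pi>"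
  let ?A' = "\<lambda>i. charge_values \<pi> x y i - {x i}"
  have "set \<pi> = I" "distinct \<pi>"
    using \<pi> by (auto dest: permutations_of_setD)
  then have run: "set ?run \<subseteq> {i \<in> I. x i = y i}" "card (set ?run) = length ?run"
    by (auto dest: set_takeWhileD intro: distinct_card)
  have charged: "charged I \<pi> x y = Pi\<^sub>E I ?A - Pi\<^sub>E I ?A'"
    by (auto simp: charged_def PiE_def Pi_def)
  have sub: "Pi\<^sub>E I ?A' \<subseteq> Pi\<^sub>E I ?A"
    by (rule PiE_mono) auto
  have fin: "finite (Pi\<^sub>E I ?A)"
    using I by (intro finite_PiE) (auto simp: charge_values_def)
  have vals: "x i \<in> trits" "y i \<in> trits" if "i \<in> I" for i
    using x y that by auto
  have "real (card (?A i)) = (if x i = y i then 2 else 1) * (if i \<in> set ?run then 3/2 else 1)"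
    if "i \<in> I" for i
    using vals[OF that] that run(1) by (auto simp: charge_values_def)
  then have "real (card (Pi\<^sub>E I ?A)) = 2 ^ agreements I x y * (3/2) ^ card {i \<in> I. i \<in> set ?run}"
    using I by (simp add: card_PiE prod.distrib prod_if_eq_power agreements_def)
  also have "{i \<in> I. i \<in> set ?run} = set ?run"
    using run(1) by auto
  finally have card_all: "real (card (Pi\<^sub>E I ?A)) = 2 ^ agreements I x y * (3/2) ^ length ?run"
    using run(2) by simp
  have "card (?A' i) = (if x i = y i then 2 else 1)" if "i \<in> I" for i
    using vals[OF that] third_trit[of "x i" "y i"] by (auto simp: charge_values_def)
  then have card_avoid: "card (Pi\<^sub>E I ?A') = 2 ^ agreements I x y"
    using I by (simp add: card_PiE prod_if_eq_power agreements_def)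
  have "card (charged I \<pi> x y) = card (Pi\<^sub>E I ?A) - card (Pi\<^sub>E I ?A')"
    unfolding charged by (rule card_Diff_subset[OF finite_subset[OF sub fin] sub])
  moreover have "card (Pi\<^sub>E I ?A') \<le> card (Pi\<^sub>E I ?A)"
    by (rule card_mono[OF fin sub])
  ultimately have "real (card (charged I \<pi> x y)) = real (card (Pi\<^sub>E I ?A)) - real (card (Pi\<^sub>E I ?A'))"
    by (simp add: of_nat_diff)
  then show ?thesis
    by (simp add: card_all card_avoid algebra_simps)
qed

lemma sum_card_charged_permutations:
  assumes "finite I" "x \<in> I \<rightarrow> trits" "y \<in> I \<rightarrow> trits"
  shows "(\<Sum>\<pi>\<in>permutations_of_set I. real (card (charged I \<pi> x y))) =
    fact (card I) *
      (2 ^ agreements I x y * (run_mean (3/2) (agreements I x y) (hamming_dist I x y) - 1))"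
proof -
  let ?L = "\<lambda>\<pi>. length (takeWhile (\<lambda>i. x i = y i) \<pi>)"
  have "(\<Sum>\<pi>\<in>permutations_of_set I. real (card (charged I \<pi> x y))) =
      (\<Sum>\<pi>\<in>permutations_of_set I. 2 ^ agreements I x y * ((3/2) ^ ?L \<pi> - 1))"
    using assms by (intro sum.cong refl card_charged)
  also have "\<dots> = 2 ^ agreements I x y * ((\<Sum>\<pi>\<in>permutations_of_set I. (3/2) ^ ?L \<pi>) - fact (card I))"
    using assms(1) by (simp add: sum_distrib_left[symmetric] sum_subtractf)
  also have "\<dots> = fact (card I) *
      (2 ^ agreements I x y * (run_mean (3/2) (agreements I x y) (hamming_dist I x y) - 1))"
    using assms(1) by (simp add: sum_permutations_takeWhile_power agreements_def hamming_dist_def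
        algebra_simps)
  finally show ?thesis .
qed

section \<open>Random restrictions\<close>

(* A restriction rho leaves coordinate i free if rho i = 3 and otherwise confines it to the two
   symbols x i and rho i. *)
definition restrictions :: "'i set \<Rightarrow> ('i \<Rightarrow> nat) \<Rightarrow> ('i \<Rightarrow> nat) set" where
  "restrictions I x = (\<Pi>\<^sub>E i\<in>I. insert 3 (trits - {x i}))"

definition restriction_weight :: "'i set \<Rightarrow> real \<Rightarrow> ('i \<Rightarrow> nat) \<Rightarrow> real" where
  "restriction_weight I w \<rho> = (\<Prod>i\<in>I. if \<rho> i = 3 then w else 1/2)"

definition compatible :: "'i set \<Rightarrow> ('i \<Rightarrow> nat) set \<Rightarrow> ('i \<Rightarrow> nat) \<Rightarrow> ('i \<Rightarrow> nat) \<Rightarrow> ('i \<Rightarrow> nat) set" where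
  "compatible I W x \<rho> = {z \<in> W. \<forall>i\<in>I. \<rho> i \<noteq> 3 \<longrightarrow> z i = x i \<or> z i = \<rho> i}"

lemma restriction_weight_nonneg: "0 \<le> w \<Longrightarrow> 0 \<le> restriction_weight I w \<rho>"
  unfolding restriction_weight_def by (intro prod_nonneg) auto

lemma sum_restriction_values_compatible:
  fixes w :: real
  assumes "a \<in> trits" "b \<in> trits"
  shows "(\<Sum>r\<in>insert 3 (trits - {a}). (if r = 3 then w else 1/2) * of_bool (r \<noteq> 3 \<longrightarrow> b = a \<or> b = r)) =
    (if a = b then 1 + w else w + 1/2)"
  using assms unfolding trits_def by (elim insertE; simp add: insert_Diff_if)

lemma sum_restriction_values_power:
  fixes w :: real
  assumes "a \<in> trits"
  shows "(\<Sum>r\<in>insert 3 (trits - {a}). if r = 3 then 3/2 * w else 1/2) = 1 + 3/2 * w"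
  using assms unfolding trits_def by (elim insertE; simp add: insert_Diff_if)

lemma sum_restriction_weight_card_compatible:
  assumes I: "finite I" and W: "finite W" "W \<subseteq> I \<rightarrow> trits" and x: "x \<in> I \<rightarrow> trits"
  shows "(\<Sum>\<rho>\<in>restrictions I x. restriction_weight I w \<rho> * card (compatible I W x \<rho>)) =
    (\<Sum>z\<in>W. (w + 1/2) ^ hamming_dist I x z * (1 + w) ^ agreements I x z)"
proof -
  let ?g = "\<lambda>z i r. (if r = 3 then w else 1/2) * of_bool (r \<noteq> 3 \<longrightarrow> z i = x i \<or> z i = r)"
  have "restriction_weight I w \<rho> * card (compatible I W x \<rho>) = (\<Sum>z\<in>W. \<Prod>i\<in>I. ?g z i (\<rho> i))" for \<rho>
  proof -
    have "real (card (compatible I W x \<rho>)) =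
        (\<Sum>z\<in>W. of_bool (\<forall>i\<in>I. \<rho> i \<noteq> 3 \<longrightarrow> z i = x i \<or> z i = \<rho> i))"
      using W(1) by (simp add: compatible_def Int_def)
    then show ?thesis
      using I by (simp add: restriction_weight_def sum_distrib_left prod.distrib prod_of_bool)
  qed
  then have "(\<Sum>\<rho>\<in>restrictions I x. restriction_weight I w \<rho> * card (compatible I W x \<rho>)) =
      (\<Sum>z\<in>W. \<Sum>\<rho>\<in>restrictions I x. \<Prod>i\<in>I. ?g z i (\<rho> i))"
    by (simp add: sum.swap[of _ "restrictions I x"])
  also have "\<dots> = (\<Sum>z\<in>W. \<Prod>i\<in>I. \<Sum>r\<in>insert 3 (trits - {x i}). ?g z i r)"
    unfolding restrictions_def using I by (intro sum.cong refl prod_sum_PiE[symmetric]) auto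
  also have "\<dots> = (\<Sum>z\<in>W. \<Prod>i\<in>I. if x i = z i then 1 + w else w + 1/2)"
  proof (intro sum.cong prod.cong refl)
    fix z i
    assume "z \<in> W" "i \<in> I"
    then have "x i \<in> trits" "z i \<in> trits"
      using x W(2) by auto
    then show "(\<Sum>r\<in>insert 3 (trits - {x i}). ?g z i r) = (if x i = z i then 1 + w else w + 1/2)"
      by (rule sum_restriction_values_compatible)
  qed
  also have "\<dots> = (\<Sum>z\<in>W. (w + 1/2) ^ hamming_dist I x z * (1 + w) ^ agreements I x z)"
    using I by (simp add: prod_if_eq_power agreements_def hamming_dist_def mult.commute)
  finally show ?thesis .
qed

lemma sum_restriction_weight_power:
  assumes I: "finite I" and x: "x \<in> I \<rightarrow> trits"
  shows "(\<Sum>\<rho>\<in>restrictions I x. restriction_weight I w \<rho> * (3/2) ^ card {i \<in> I. \<rho> i = 3}) =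
    (1 + 3/2 * w) ^ card I"
proof -
  have "restriction_weight I w \<rho> * (3/2) ^ card {i \<in> I. \<rho> i = 3} =
      (\<Prod>i\<in>I. if \<rho> i = 3 then 3/2 * w else 1/2)" for \<rho>
  proof -
    have "(3/2::real) ^ card {i \<in> I. \<rho> i = 3} = (\<Prod>i\<in>I. if \<rho> i = 3 then 3/2 else 1)"
      using I by (simp add: prod_if_eq_power)
    then show ?thesis
      unfolding restriction_weight_def by (simp flip: prod.distrib) (intro prod.cong refl, simp)
  qed
  then have "(\<Sum>\<rho>\<in>restrictions I x. restriction_weight I w \<rho> * (3/2) ^ card {i \<in> I. \<rho> i = 3}) =
      (\<Sum>\<rho>\<in>restrictions I x. \<Prod>i\<in>I. if \<rho> i = 3 then 3/2 * w else 1/2)"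
    by simp
  also have "\<dots> = (\<Prod>i\<in>I. \<Sum>r\<in>insert 3 (trits - {x i}). if r = 3 then 3/2 * w else 1/2)"
    unfolding restrictions_def using I by (intro prod_sum_PiE[symmetric]) auto
  also have "\<dots> = (\<Prod>i\<in>I. 1 + 3/2 * w)"
    using x by (intro prod.cong refl sum_restriction_values_power) auto
  finally show ?thesis
    by simp
qed

lemma far_pair_term_le:
  fixes w :: real and a h n t :: nat
  assumes w: "0 \<le> w" and n: "a + h = n" and far: "n + 2 * t \<le> 2 * h"
  shows "sqrt (((1 + w) * (1 + 2 * w)) ^ n * ((1 + 2 * w) / (1 + w)) ^ (2 * t)) * (1/2) ^ h \<le>
    (w + 1/2) ^ h * (1 + w) ^ a"
proof -
  define \<rho> where "\<rho> = (1 + 2 * w) / (1 + w)"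
  have \<rho>: "1 \<le> \<rho>" "(1 + w) * \<rho> = 1 + 2 * w"
    using w by (auto simp: \<rho>_def)
  have "((1 + w) * (1 + 2 * w)) ^ n * \<rho> ^ (2 * t) = ((1 + w) ^ n)\<^sup>2 * \<rho> ^ (n + 2 * t)"
    unfolding \<rho>(2)[symmetric] by (simp add: power_mult_distrib power_add power2_eq_square mult_ac)
  also have "\<dots> \<le> ((1 + w) ^ n)\<^sup>2 * \<rho> ^ (2 * h)"
    using far \<rho>(1) by (intro mult_left_mono power_increasing) auto
  also have "\<dots> = ((1 + w) ^ n * \<rho> ^ h)\<^sup>2"
    by (simp add: power_mult_distrib power_even_eq)
  finally have "sqrt (((1 + w) * (1 + 2 * w)) ^ n * \<rho> ^ (2 * t)) \<le> (1 + w) ^ n * \<rho> ^ h"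
    using w \<rho>(1) by (intro real_le_lsqrt) auto
  also have "(1 + w) ^ n * \<rho> ^ h = (1 + 2 * w) ^ h * (1 + w) ^ a"
    unfolding \<rho>(2)[symmetric] n[symmetric] by (simp add: power_mult_distrib power_add mult_ac)
  finally have "sqrt (((1 + w) * (1 + 2 * w)) ^ n * \<rho> ^ (2 * t)) * (1/2) ^ h \<le>
      (1/2) ^ h * (1 + 2 * w) ^ h * (1 + w) ^ a"
    by (simp add: mult_right_mono mult_ac)
  also have "(1/2) ^ h * (1 + 2 * w) ^ h = (w + 1/2) ^ h"
  proof -
    have "w + 1/2 = 1/2 * (1 + 2 * w)"
      by simp
    then show ?thesis
      by (simp only: power_mult_distrib)
  qed
  finally show ?thesis
    unfolding \<rho>_def .
qed

lemma square_le_tilted_product: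
  fixes w :: real
  assumes "0 \<le> w"
  shows "(1 + 3/2 * w)\<^sup>2 \<le> (1 + w\<^sup>2 / 4) * ((1 + w) * (1 + 2 * w))"
proof -
  have "(1 + w\<^sup>2 / 4) * ((1 + w) * (1 + 2 * w)) = (1 + 3/2 * w)\<^sup>2 + (3/4 * w ^ 3 + 1/2 * w ^ 4)"
    by (simp add: power2_eq_square power3_eq_cube power4_eq_xxxx algebra_simps)
  moreover have "0 \<le> 3/4 * w ^ 3 + 1/2 * w ^ 4"
    using assms by simp
  ultimately show ?thesis
    by linarith
qed

lemma Bernoulli_ratio_power:
  fixes w :: real
  assumes "0 \<le> w" "w \<le> 1"
  shows "1 + real t * w \<le> ((1 + 2 * w) / (1 + w)) ^ (2 * t)"
proof -
  have "w * w \<le> w"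
    using assms by (simp add: mult_left_le)
  then have "1 + w / 2 \<le> (1 + 2 * w) / (1 + w)"
    using assms by (simp add: field_simps)
  have "1 + real (2 * t) * (w / 2) \<le> (1 + w / 2) ^ (2 * t)"
    using assms by (intro Bernoulli_inequality) auto
  also have "\<dots> \<le> ((1 + 2 * w) / (1 + w)) ^ (2 * t)"
    using assms \<open>1 + w / 2 \<le> (1 + 2 * w) / (1 + w)\<close> by (intro power_mono) auto
  finally show ?thesis
    by simp
qed

definition defect :: "nat \<Rightarrow> nat \<Rightarrow> real \<Rightarrow> real" where
  "defect n t w = 8 * (real t + 1) / (real n + 1) + sqrt (4 * (1 + w\<^sup>2 / 4) ^ n / (1 + real t * w))"

locale trifferent_family =
  fixes I :: "'i set" and W :: "('i \<Rightarrow> nat) set"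
  assumes finite_index [simp]: "finite I"
    and finite_family [simp]: "finite W"
    and family_trits: "W \<subseteq> I \<rightarrow> trits"
    and trifferent: "trifferent_on I W"
begin

lemma family_funcset: "z \<in> W \<Longrightarrow> z \<in> I \<rightarrow> trits"
  using family_trits by blast

lemma family_val: "z \<in> W \<Longrightarrow> i \<in> I \<Longrightarrow> z i \<in> trits"
  using family_trits by blast

lemma trifferent_triple:
  assumes "x \<in> W" "y \<in> W" "z \<in> W" "x \<noteq> y" "y \<noteq> z" "x \<noteq> z"
  obtains i where "i \<in> I" "x i \<noteq> y i" "y i \<noteq> z i" "x i \<noteq> z i"
  using trifferent assms unfolding trifferent_on_def by blast

lemma card_avoiders_le_two:
  assumes s: "s \<in> I \<rightarrow> trits"
  shows "card (avoiders I W s) \<le> 2"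
proof (rule ccontr)
  assume "\<not> ?thesis"
  then have "3 \<le> card (avoiders I W s)"
    by simp
  then obtain T where "T \<subseteq> avoiders I W s" "card T = 3"
    by (rule obtain_subset_with_card_n)
  then obtain x y z where xyz: "x \<in> avoiders I W s" "y \<in> avoiders I W s" "z \<in> avoiders I W s"
    and ne: "x \<noteq> y" "y \<noteq> z" "x \<noteq> z"
    by (auto simp: card_3_iff)
  then have W: "x \<in> W" "y \<in> W" "z \<in> W"
    by (auto simp: avoiders_def)
  obtain i where i: "i \<in> I" "x i \<noteq> y i" "y i \<noteq> z i" "x i \<noteq> z i"
    using trifferent_triple[OF W ne] .
  have "x i \<noteq> s i" "y i \<noteq> s i" "z i \<noteq> s i"
    using xyz i(1) by (auto simp: avoiders_def)
  moreover have "s i \<in> {x i, y i, z i}"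
    using trits_pigeonhole[of "x i" "y i" "z i" "s i"] s i W family_val by auto
  ultimately show False
    by auto
qed

lemma elias_bound: "card W * 2 ^ card I \<le> 2 * 3 ^ card I"
proof -
  have "card W * 2 ^ card I = (\<Sum>s\<in>I \<rightarrow>\<^sub>E trits. card (avoiders I W s))"
    by (rule sum_card_avoiders[symmetric]) (simp_all add: family_trits)
  also have "\<dots> \<le> (\<Sum>s\<in>I \<rightarrow>\<^sub>E trits. 2)"
    by (intro sum_mono card_avoiders_le_two) (auto simp: PiE_iff)
  also have "\<dots> = 2 * 3 ^ card I"
    by (simp add: card_PiE)
  finally show ?thesis .
qed

lemma pair_count_identity:
  "2 * (card W * 2 ^ card I) + 2 * card (uncovered I W) =
   2 * 3 ^ card I + (\<Sum>x\<in>W. \<Sum>y\<in>W - {x}. 2 ^ agreements I x y)"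
proof -
  let ?S = "I \<rightarrow>\<^sub>E trits" and ?a = "\<lambda>s. card (avoiders I W s)"
  have pointwise: "2 * ?a s + 2 * of_bool (avoiders I W s = {}) = 2 + ?a s * (?a s - 1)"
    if "s \<in> ?S" for s
  proof -
    have "?a s \<le> 2"
      using that by (intro card_avoiders_le_two) (auto simp: PiE_iff)
    moreover have "avoiders I W s = {} \<longleftrightarrow> ?a s = 0"
      by (simp add: avoiders_def)
    ultimately show ?thesis
      by (cases "?a s") (auto simp: le_Suc_eq)
  qed
  have "2 * (card W * 2 ^ card I) + 2 * card (uncovered I W) =
      2 * (\<Sum>s\<in>?S. ?a s) + 2 * (\<Sum>s\<in>?S. of_bool (avoiders I W s = {}))"
    by (simp add: sum_card_avoiders[OF finite_index finite_family family_trits] uncovered_def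
        finite_PiE Int_def)
  also have "\<dots> = (\<Sum>s\<in>?S. 2 * ?a s + 2 * of_bool (avoiders I W s = {}))"
    by (simp only: sum.distrib sum_distrib_left)
  also have "\<dots> = (\<Sum>s\<in>?S. 2 + ?a s * (?a s - 1))"
    using pointwise by (rule sum.cong[OF refl])
  also have "\<dots> = 2 * card ?S + (\<Sum>s\<in>?S. ?a s * (?a s - 1))"
    by (subst sum.distrib) (simp add: mult.commute)
  also have "\<dots> = 2 * 3 ^ card I + (\<Sum>x\<in>W. \<Sum>y\<in>W - {x}. 2 ^ agreements I x y)"
    by (simp only: sum_card_avoiders_pairs[OF finite_index finite_family family_trits]
        card_PiE_trits[OF finite_index])
  finally show ?thesis .
qed

lemma charged_subset_uncovered:
  assumes x: "x \<in> W" and y: "y \<in> W" and xy: "x \<noteq> y"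
  shows "charged I \<pi> x y \<subseteq> uncovered I W"
proof
  fix s
  assume s: "s \<in> charged I \<pi> x y"
  have "avoiders I W s = {}"
  proof (rule ccontr)
    assume "avoiders I W s \<noteq> {}"
    then obtain z where z: "z \<in> W" "\<forall>i\<in>I. z i \<noteq> s i"
      by (auto simp: avoiders_def)
    obtain i0 where i0: "i0 \<in> I" "s i0 = x i0"
      using s by (auto simp: charged_def)
    then have "x i0 = y i0"
      using charged_agrees_only_in_run(1)[OF s] x y family_val by blast
    then have "z \<noteq> x" "z \<noteq> y"
      using z i0 by auto
    then obtain i where i: "i \<in> I" "x i \<noteq> y i" "y i \<noteq> z i" "x i \<noteq> z i"
      using trifferent_triple[OF x y z(1) xy] by metis
    have "z i = 3 - x i - y i"
      using eq_third_trit[of "x i" "y i" "z i"] i x y z(1) family_val by auto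
    moreover have "s i = 3 - x i - y i"
      using charged_third[OF s i(1,2)] .
    ultimately show False
      using z(2) i(1) by auto
  qed
  moreover have "s \<in> I \<rightarrow>\<^sub>E trits"
    using s charged_subset_strings[OF family_funcset[OF x] family_funcset[OF y]] by blast
  ultimately show "s \<in> uncovered I W"
    by (simp add: uncovered_def)
qed

lemma charged_runs_not_subset:
  assumes s: "s \<in> charged I \<pi> x y" "s \<in> charged I \<pi> x' y'"
    and W: "x \<in> W" "y \<in> W" "x' \<in> W" "y' \<in> W" "x \<noteq> y"
    and z: "z \<in> {x', y'}" "z \<notin> {x, y}"
  shows "\<not> set (takeWhile (\<lambda>j. x' j = y' j) \<pi>) \<subseteq> set (takeWhile (\<lambda>j. x j = y j) \<pi>)"
proof -
  have zW: "z \<in> W"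
    using z W by auto
  obtain i where i: "i \<in> I" "x i \<noteq> y i" "y i \<noteq> z i" "x i \<noteq> z i"
    using trifferent_triple[OF W(1,2) zW W(5)] z by auto
  have vals: "x i \<in> trits" "y i \<in> trits" "z i \<in> trits" "x' i \<in> trits" "y' i \<in> trits"
    using W zW i(1) family_val by auto
  have "s i = z i"
    using charged_third[OF s(1) i(1,2)] eq_third_trit[of "x i" "y i" "z i"] i vals by auto
  have "s i = x' i"
  proof (cases "z = x'")
    case False
    then have "z = y'"
      using z by auto
    show ?thesis
    proof (rule ccontr)
      assume "s i \<noteq> x' i"
      then have "x' i \<noteq> y' i"
        using \<open>s i = z i\<close> \<open>z = y'\<close> by auto
      then have "s i = 3 - x' i - y' i"
        using charged_third[OF s(2) i(1)] by blast
      then show False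
        using \<open>s i = z i\<close> \<open>z = y'\<close> third_trit(3)[OF vals(4,5) \<open>x' i \<noteq> y' i\<close>] by simp
    qed
  qed (use \<open>s i = z i\<close> in simp)
  then have "i \<in> set (takeWhile (\<lambda>j. x' j = y' j) \<pi>)"
    using charged_agrees_only_in_run(2)[OF s(2) i(1)] vals by blast
  moreover have "i \<notin> set (takeWhile (\<lambda>j. x j = y j) \<pi>)"
    using i(2) by (auto dest: set_takeWhileD)
  ultimately show ?thesis
    by blast
qed

lemma charged_pair_unique:
  assumes s: "s \<in> charged I \<pi> x y" "s \<in> charged I \<pi> x' y'"
    and W: "x \<in> W" "y \<in> W" "x' \<in> W" "y' \<in> W" "x \<noteq> y" "x' \<noteq> y'"
  shows "{x', y'} = {x, y}"
proof (rule ccontr)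
  assume ne: "{x', y'} \<noteq> {x, y}"
  then obtain z u where "z \<in> {x', y'}" "z \<notin> {x, y}" "u \<in> {x, y}" "u \<notin> {x', y'}"
    using W(5,6) by blast
  then have "\<not> set (takeWhile (\<lambda>j. x' j = y' j) \<pi>) \<subseteq> set (takeWhile (\<lambda>j. x j = y j) \<pi>)"
    "\<not> set (takeWhile (\<lambda>j. x j = y j) \<pi>) \<subseteq> set (takeWhile (\<lambda>j. x' j = y' j) \<pi>)"
    using charged_runs_not_subset[OF s W(1-5)] charged_runs_not_subset[OF s(2,1) W(3,4,1,2,6)] by auto
  then show False
    using set_takeWhile_nested[of "\<lambda>j. x j = y j" \<pi> "\<lambda>j. x' j = y' j"] by blast
qed

lemma card_charging_pairs_le_two:
  "card {p \<in> (SIGMA x:W. W - {x}). s \<in> charged I \<pi> (fst p) (snd p)} \<le> 2"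
  (is "card ?C \<le> 2")
proof (cases "\<exists>x\<in>W. \<exists>y\<in>W - {x}. s \<in> charged I \<pi> x y")
  case True
  then obtain x y where xy: "x \<in> W" "y \<in> W" "x \<noteq> y" "s \<in> charged I \<pi> x y"
    by blast
  have "?C \<subseteq> {(x, y), (y, x)}"
  proof (rule subsetI)
    fix p
    assume p: "p \<in> ?C"
    obtain x' y' where p_eq: "p = (x', y')"
      by (cases p)
    have x'y': "x' \<in> W" "y' \<in> W" "x' \<noteq> y'" "s \<in> charged I \<pi> x' y'"
      using p unfolding p_eq by auto
    have "{x', y'} = {x, y}"
      by (rule charged_pair_unique[OF xy(4) x'y'(4) xy(1,2) x'y'(1,2) xy(3) x'y'(3)])
    then show "p \<in> {(x, y), (y, x)}"
      unfolding p_eq by (auto simp: doubleton_eq_iff)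
  qed
  then have "card ?C \<le> card {(x, y), (y, x)}"
    by (rule card_mono[rotated]) simp
  also have "\<dots> = 2"
    using xy(3) by (subst card_insert_disjoint) auto
  finally show ?thesis .
next
  case False
  then have "?C = {}"
    by auto
  then have "card ?C = 0"
    by (simp only: card.empty)
  then show ?thesis
    by linarith
qed

lemma sum_card_charged_le:
  "(\<Sum>x\<in>W. \<Sum>y\<in>W - {x}. card (charged I \<pi> x y)) \<le> 2 * card (uncovered I W)"
proof -
  let ?P = "SIGMA x:W. W - {x}"
  have "(\<Sum>x\<in>W. \<Sum>y\<in>W - {x}. card (charged I \<pi> x y)) = (\<Sum>p\<in>?P. card (charged I \<pi> (fst p) (snd p)))"
    by (simp add: sum.Sigma split_def)
  also have "\<dots> = (\<Sum>p\<in>?P. card {s \<in> uncovered I W. s \<in> charged I \<pi> (fst p) (snd p)})"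
  proof (rule sum.cong[OF refl])
    fix p
    assume "p \<in> ?P"
    then have "charged I \<pi> (fst p) (snd p) \<subseteq> uncovered I W"
      by (intro charged_subset_uncovered) auto
    then have "{s \<in> uncovered I W. s \<in> charged I \<pi> (fst p) (snd p)} = charged I \<pi> (fst p) (snd p)"
      by blast
    then show "card (charged I \<pi> (fst p) (snd p)) =
        card {s \<in> uncovered I W. s \<in> charged I \<pi> (fst p) (snd p)}"
      by simp
  qed
  also have "\<dots> = (\<Sum>s\<in>uncovered I W. card {p \<in> ?P. s \<in> charged I \<pi> (fst p) (snd p)})"
    by (rule sum_multicount_gen) (auto simp: uncovered_def finite_PiE)
  also have "\<dots> \<le> (\<Sum>s\<in>uncovered I W. 2)"
    by (intro sum_mono card_charging_pairs_le_two)
  finally show ?thesis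
    by simp
qed

lemma charging_bound:
  "(\<Sum>x\<in>W. \<Sum>y\<in>W - {x}. 2 ^ agreements I x y *
      (run_mean (3/2) (agreements I x y) (hamming_dist I x y) - 1)) \<le> 2 * card (uncovered I W)"
proof -
  let ?\<Pi> = "permutations_of_set I"
  let ?c = "\<lambda>x y. 2 ^ agreements I x y * (run_mean (3/2) (agreements I x y) (hamming_dist I x y) - 1)"
  have "fact (card I) * (\<Sum>x\<in>W. \<Sum>y\<in>W - {x}. ?c x y) =
      (\<Sum>x\<in>W. \<Sum>y\<in>W - {x}. \<Sum>\<pi>\<in>?\<Pi>. real (card (charged I \<pi> x y)))"
    by (simp add: sum_distrib_left sum_card_charged_permutations family_funcset)
  also have "\<dots> = (\<Sum>\<pi>\<in>?\<Pi>. \<Sum>x\<in>W. \<Sum>y\<in>W - {x}. real (card (charged I \<pi> x y)))"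
    by (simp add: sum.swap[of _ ?\<Pi>])
  also have "\<dots> \<le> (\<Sum>\<pi>\<in>?\<Pi>. 2 * real (card (uncovered I W)))"
  proof (rule sum_mono)
    fix \<pi>
    have "real (\<Sum>x\<in>W. \<Sum>y\<in>W - {x}. card (charged I \<pi> x y)) \<le> real (2 * card (uncovered I W))"
      using sum_card_charged_le by (simp only: of_nat_le_iff)
    then show "(\<Sum>x\<in>W. \<Sum>y\<in>W - {x}. real (card (charged I \<pi> x y))) \<le> 2 * real (card (uncovered I W))"
      by simp
  qed
  also have "\<dots> = fact (card I) * (2 * real (card (uncovered I W)))"
    by simp
  finally show ?thesis
    by simp
qed

lemma pair_weight_bound:
  "2 * real (card W) * 2 ^ card I \<le> 2 * 3 ^ card I +
    (\<Sum>x\<in>W. \<Sum>y\<in>W - {x}. 2 ^ agreements I x y *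
      (2 - run_mean (3/2) (agreements I x y) (hamming_dist I x y)))"
proof -
  have "real (2 * (card W * 2 ^ card I) + 2 * card (uncovered I W)) =
      real (2 * 3 ^ card I + (\<Sum>x\<in>W. \<Sum>y\<in>W - {x}. 2 ^ agreements I x y))"
    by (simp only: pair_count_identity)
  then have "2 * real (card W) * 2 ^ card I + 2 * real (card (uncovered I W)) =
      2 * 3 ^ card I + (\<Sum>x\<in>W. \<Sum>y\<in>W - {x}. 2 ^ agreements I x y)"
    by simp
  moreover have "(\<Sum>x\<in>W. \<Sum>y\<in>W - {x}. 2 ^ agreements I x y *
        (2 - run_mean (3/2) (agreements I x y) (hamming_dist I x y))) =
      (\<Sum>x\<in>W. \<Sum>y\<in>W - {x}. 2 ^ agreements I x y) -
      (\<Sum>x\<in>W. \<Sum>y\<in>W - {x}. 2 ^ agreements I x y *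
        (run_mean (3/2) (agreements I x y) (hamming_dist I x y) - 1))"
    by (simp add: sum_subtractf[symmetric] algebra_simps)
  ultimately show ?thesis
    using charging_bound by linarith
qed

lemma trifferent_family_restrict:
  assumes "J \<subseteq> I"
  shows "trifferent_family J {z \<in> W. \<forall>i\<in>I - J. z i = a i \<or> z i = b i}"
  unfolding trifferent_family_def
proof (intro conjI)
  show "finite J"
    using assms by (rule finite_subset) simp
  show "finite {z \<in> W. \<forall>i\<in>I - J. z i = a i \<or> z i = b i}"
    by simp
  have "{z \<in> W. \<forall>i\<in>I - J. z i = a i \<or> z i = b i} \<subseteq> W"
    by blast
  also have "W \<subseteq> I \<rightarrow> trits"
    by (rule family_trits)
  also have "I \<rightarrow> trits \<subseteq> J \<rightarrow> trits"
    by (rule Pi_anti_mono[OF assms])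
  finally show "{z \<in> W. \<forall>i\<in>I - J. z i = a i \<or> z i = b i} \<subseteq> J \<rightarrow> trits" .
  show "trifferent_on J {z \<in> W. \<forall>i\<in>I - J. z i = a i \<or> z i = b i}"
    unfolding trifferent_on_def
  proof clarify
    fix x y z
    assume x: "x \<in> W" "\<forall>i\<in>I - J. x i = a i \<or> x i = b i"
      and y: "y \<in> W" "\<forall>i\<in>I - J. y i = a i \<or> y i = b i"
      and z: "z \<in> W" "\<forall>i\<in>I - J. z i = a i \<or> z i = b i"
      and ne: "x \<noteq> y" "y \<noteq> z" "x \<noteq> z"
    obtain i where i: "i \<in> I" "x i \<noteq> y i" "y i \<noteq> z i" "x i \<noteq> z i"
      using trifferent_triple[OF x(1) y(1) z(1) ne] .
    have "i \<in> J"
    proof (rule ccontr)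
      assume "i \<notin> J"
      then have "x i \<in> {a i, b i}" "y i \<in> {a i, b i}" "z i \<in> {a i, b i}"
        using x(2) y(2) z(2) i(1) by auto
      with i(2-4) show False
        by auto
    qed
    with i show "\<exists>i\<in>J. x i \<noteq> y i \<and> y i \<noteq> z i \<and> x i \<noteq> z i"
      by blast
  qed
qed

lemma card_compatible_le:
  "real (card (compatible I W x \<rho>)) \<le> 2 * (3/2) ^ card {i \<in> I. \<rho> i = 3}"
proof -
  let ?J = "{i \<in> I. \<rho> i = 3}"
  have "compatible I W x \<rho> = {z \<in> W. \<forall>i\<in>I - ?J. z i = x i \<or> z i = \<rho> i}"
    by (auto simp: compatible_def)
  then interpret restricted: trifferent_family ?J "compatible I W x \<rho>"
    using trifferent_family_restrict[of ?J x \<rho>] by simp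
  have "real (card (compatible I W x \<rho>)) * 2 ^ card ?J \<le> 2 * 3 ^ card ?J"
    using restricted.elias_bound by (metis (mono_tags, lifting) of_nat_le_iff of_nat_mult
        of_nat_numeral of_nat_power)
  then show ?thesis
    by (simp add: power_divide field_simps)
qed

lemma tilted_elias_bound:
  fixes w :: real
  assumes x: "x \<in> I \<rightarrow> trits" and w: "0 \<le> w"
  shows "(\<Sum>z\<in>W. (w + 1/2) ^ hamming_dist I x z * (1 + w) ^ agreements I x z) \<le>
    2 * (1 + 3/2 * w) ^ card I"
proof -
  have "(\<Sum>z\<in>W. (w + 1/2) ^ hamming_dist I x z * (1 + w) ^ agreements I x z) =
      (\<Sum>\<rho>\<in>restrictions I x. restriction_weight I w \<rho> * card (compatible I W x \<rho>))"
    using x family_trits by (simp add: sum_restriction_weight_card_compatible)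
  also have "\<dots> \<le> (\<Sum>\<rho>\<in>restrictions I x. restriction_weight I w \<rho> * (2 * (3/2) ^ card {i \<in> I. \<rho> i = 3}))"
    using w by (intro sum_mono mult_left_mono card_compatible_le restriction_weight_nonneg)
  also have "\<dots> = 2 * (1 + 3/2 * w) ^ card I"
    using sum_restriction_weight_power[OF finite_index x, of w]
    by (simp add: sum_distrib_left[symmetric] mult.left_commute)
  finally show ?thesis .
qed

lemma sum_half_pow_hamming_le_one:
  assumes x: "x \<in> W"
  shows "(\<Sum>y\<in>W - {x}. (1/2::real) ^ hamming_dist I x y) \<le> 1"
proof -
  have "(\<Sum>y\<in>W. (1/2::real) ^ hamming_dist I x y) \<le> 2"
    using tilted_elias_bound[OF family_funcset[OF x], of 0] by simp
  moreover have "(\<Sum>y\<in>W. (1/2::real) ^ hamming_dist I x y) = 1 + (\<Sum>y\<in>W - {x}. (1/2) ^ hamming_dist I x y)"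
    using x by (simp add: sum.remove hamming_dist_def)
  ultimately show ?thesis
    by simp
qed

lemma far_weight_bound:
  fixes w :: real
  assumes x: "x \<in> I \<rightarrow> trits" and w: "0 \<le> w" "w \<le> 1"
  shows "(\<Sum>y\<in>{y \<in> W. agreements I x y + 2 * t \<le> hamming_dist I x y}. (1/2::real) ^ hamming_dist I x y)\<^sup>2
    \<le> 4 * (1 + w\<^sup>2 / 4) ^ card I / (1 + real t * w)"
proof -
  let ?n = "card I" and ?a = "agreements I x" and ?h = "hamming_dist I x"
  let ?c = "(1 + w) * (1 + 2 * w)" and ?\<rho> = "(1 + 2 * w) / (1 + w)"
  define S where "S = (\<Sum>y\<in>{y \<in> W. ?a y + 2 * t \<le> ?h y}. (1/2::real) ^ ?h y)"
  have pos: "0 < ?c" "0 < ?\<rho>" "0 \<le> S"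
    using w by (auto simp: S_def intro: sum_nonneg)
  have "sqrt (?c ^ ?n * ?\<rho> ^ (2 * t)) * S \<le>
      (\<Sum>y\<in>{y \<in> W. ?a y + 2 * t \<le> ?h y}. (w + 1/2) ^ ?h y * (1 + w) ^ ?a y)"
    unfolding S_def sum_distrib_left
  proof (rule sum_mono)
    fix y
    assume "y \<in> {y \<in> W. ?a y + 2 * t \<le> ?h y}"
    then show "sqrt (?c ^ ?n * ?\<rho> ^ (2 * t)) * (1/2) ^ ?h y \<le> (w + 1/2) ^ ?h y * (1 + w) ^ ?a y"
      using w agreements_add_hamming_dist[OF finite_index, of x y] by (intro far_pair_term_le) auto
  qed
  also have "\<dots> \<le> (\<Sum>y\<in>W. (w + 1/2) ^ ?h y * (1 + w) ^ ?a y)"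
    using w by (intro sum_mono2) auto
  also have "\<dots> \<le> 2 * (1 + 3/2 * w) ^ ?n"
    by (rule tilted_elias_bound[OF x w(1)])
  finally have "(sqrt (?c ^ ?n * ?\<rho> ^ (2 * t)) * S)\<^sup>2 \<le> (2 * (1 + 3/2 * w) ^ ?n)\<^sup>2"
    using pos by (intro power_mono) auto
  moreover have "(sqrt (?c ^ ?n * ?\<rho> ^ (2 * t)))\<^sup>2 = ?c ^ ?n * ?\<rho> ^ (2 * t)"
    using pos by (intro real_sqrt_pow2) simp
  then have "(sqrt (?c ^ ?n * ?\<rho> ^ (2 * t)) * S)\<^sup>2 = ?c ^ ?n * (?\<rho> ^ (2 * t) * S\<^sup>2)"
    by (simp only: power_mult_distrib mult.assoc)
  moreover have "(2 * (1 + 3/2 * w) ^ ?n)\<^sup>2 = 4 * ((1 + 3/2 * w)\<^sup>2) ^ ?n"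
    by (simp add: power_mult_distrib mult.commute flip: power_mult)
  ultimately have "?c ^ ?n * (?\<rho> ^ (2 * t) * S\<^sup>2) \<le> 4 * ((1 + 3/2 * w)\<^sup>2) ^ ?n"
    by simp
  also have "\<dots> \<le> 4 * ((1 + w\<^sup>2 / 4) * ?c) ^ ?n"
    using w square_le_tilted_product by (intro mult_left_mono power_mono) auto
  also have "\<dots> = ?c ^ ?n * (4 * (1 + w\<^sup>2 / 4) ^ ?n)"
    by (simp add: power_mult_distrib)
  finally have "?\<rho> ^ (2 * t) * S\<^sup>2 \<le> 4 * (1 + w\<^sup>2 / 4) ^ ?n"
    using pos by simp
  moreover have "(1 + real t * w) * S\<^sup>2 \<le> ?\<rho> ^ (2 * t) * S\<^sup>2"
    using Bernoulli_ratio_power[OF w] by (intro mult_right_mono) auto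
  ultimately have "(1 + real t * w) * S\<^sup>2 \<le> 4 * (1 + w\<^sup>2 / 4) ^ ?n"
    by linarith
  moreover have "0 < 1 + real t * w"
    using w by (simp add: add_pos_nonneg)
  ultimately show ?thesis
    by (simp add: S_def pos_le_divide_eq mult.commute)
qed

lemma defect_sum_le:
  assumes x: "x \<in> W" and w: "0 \<le> w" "w \<le> 1"
  shows "(\<Sum>y\<in>W - {x}. (1/2) ^ hamming_dist I x y *
      (2 - run_mean (3/2) (agreements I x y) (hamming_dist I x y))) \<le> defect (card I) t w"
proof -
  let ?a = "agreements I x" and ?h = "hamming_dist I x"
  let ?f = "\<lambda>y. (1/2::real) ^ ?h y * (2 - run_mean (3/2) (?a y) (?h y))"
  let ?near = "8 * (real t + 1) / (real (card I) + 1)"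
  define near where "near = {y \<in> W - {x}. ?h y < ?a y + 2 * t}"
  define far where "far = {y \<in> W - {x}. ?a y + 2 * t \<le> ?h y}"
  have "W - {x} = near \<union> far" "near \<inter> far = {}" "finite near" "finite far"
    by (auto simp: near_def far_def)
  then have "sum ?f (W - {x}) = sum ?f near + sum ?f far"
    by (simp add: sum.union_disjoint)
  moreover have "sum ?f near \<le> ?near"
  proof -
    have "?f y \<le> (1/2) ^ ?h y * ?near" if "y \<in> near" for y
    proof -
      have "2 - run_mean (3/2) (?a y) (?h y) \<le> 8 * (real t + 1) / (real (?a y) + real (?h y) + 1)"
        using that by (intro two_sub_run_mean_le) (simp add: near_def)
      also have "real (?a y) + real (?h y) = real (card I)"
        using agreements_add_hamming_dist[OF finite_index, of x y] by (metis of_nat_add)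
      finally show ?thesis
        by (rule mult_left_mono) simp
    qed
    then have "sum ?f near \<le> (\<Sum>y\<in>near. (1/2) ^ ?h y) * ?near"
      unfolding sum_distrib_right by (rule sum_mono)
    also have "\<dots> \<le> (\<Sum>y\<in>W - {x}. (1/2) ^ ?h y) * ?near"
      by (intro mult_right_mono sum_mono2) (auto simp: near_def)
    also have "\<dots> \<le> ?near"
      using sum_half_pow_hamming_le_one[OF x] by (intro mult_left_le_one_le) (auto intro: sum_nonneg)
    finally show ?thesis .
  qed
  moreover have "sum ?f far \<le> sqrt (4 * (1 + w\<^sup>2 / 4) ^ card I / (1 + real t * w))"
  proof -
    have "sum ?f far \<le> (\<Sum>y\<in>far. (1/2) ^ ?h y)"
      using run_mean_ge_one[of "3/2"] by (intro sum_mono) (simp add: mult_left_le)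
    also have "\<dots> \<le> (\<Sum>y\<in>{y \<in> W. ?a y + 2 * t \<le> ?h y}. (1/2) ^ ?h y)"
      by (intro sum_mono2) (auto simp: far_def)
    also have "\<dots> \<le> sqrt (4 * (1 + w\<^sup>2 / 4) ^ card I / (1 + real t * w))"
      by (intro real_le_rsqrt far_weight_bound family_funcset x w)
    finally show ?thesis .
  qed
  ultimately show ?thesis
    unfolding defect_def by linarith
qed

lemma card_mult_defect_le:
  assumes w: "0 \<le> w" "w \<le> 1"
  shows "real (card W) * (2 - defect (card I) t w) \<le> 2 * (3/2) ^ card I"
proof -
  let ?n = "card I" and ?\<delta> = "defect (card I) t w"
  let ?E = "\<lambda>x y. run_mean (3/2) (agreements I x y) (hamming_dist I x y)"
  have "(2::real) ^ agreements I x y = 2 ^ ?n * (1/2) ^ hamming_dist I x y" for x y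
  proof -
    have "(2::real) ^ ?n = 2 ^ agreements I x y * 2 ^ hamming_dist I x y"
      by (simp flip: power_add add: agreements_add_hamming_dist)
    then show ?thesis
      by (simp add: power_one_over)
  qed
  then have "(\<Sum>x\<in>W. \<Sum>y\<in>W - {x}. 2 ^ agreements I x y * (2 - ?E x y)) =
      (\<Sum>x\<in>W. 2 ^ ?n * (\<Sum>y\<in>W - {x}. (1/2) ^ hamming_dist I x y * (2 - ?E x y)))"
    by (simp add: sum_distrib_left mult.assoc)
  also have "\<dots> \<le> (\<Sum>x\<in>W. 2 ^ ?n * ?\<delta>)"
    using w by (intro sum_mono mult_left_mono defect_sum_le) auto
  finally have "2 * real (card W) * 2 ^ ?n \<le> 2 * 3 ^ ?n + real (card W) * 2 ^ ?n * ?\<delta>"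
    using pair_weight_bound by simp
  then have "(real (card W) * (2 - ?\<delta>)) * 2 ^ ?n \<le> (2 * (3/2) ^ ?n) * 2 ^ ?n"
    by (simp add: algebra_simps power_divide)
  then show ?thesis
    by simp
qed

end

lemma trifferent_code_imp_family:
  assumes "trifferent_code n C"
  shows "trifferent_family {0..<n} C"
  unfolding trifferent_family_def
proof (intro conjI)
  have C: "C \<subseteq> {0..<n} \<rightarrow>\<^sub>E trits"
    using assms by (simp add: trifferent_code_def ternary_strings_def trits_def)
  then show "finite C"
    by (rule finite_subset) (simp add: finite_PiE)
  show "C \<subseteq> {0..<n} \<rightarrow> trits"
    using C by (auto simp: PiE_def)
  show "trifferent_on {0..<n} C"
    unfolding trifferent_on_def
  proof (intro ballI impI)
    fix x y z
    assume "x \<in> C" "y \<in> C" "z \<in> C" "x \<noteq> y \<and> y \<noteq> z \<and> x \<noteq> z"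
    then obtain i where "i < n" "x i \<noteq> y i \<and> y i \<noteq> z i \<and> x i \<noteq> z i"
      using assms unfolding trifferent_code_def trifferent_def by blast
    then show "\<exists>i\<in>{0..<n}. x i \<noteq> y i \<and> y i \<noteq> z i \<and> x i \<noteq> z i"
      by auto
  qed
qed simp_all

(* t ~ n^(3/4) and w = 1/sqrt n balance the near part O(t/n) of the defect against the far part
   O(1/sqrt (t w)). *)
definition chosen_defect :: "nat \<Rightarrow> real" where
  "chosen_defect n = defect n (nat \<lfloor>real n powr (3/4)\<rfloor>) (1 / sqrt n)"

lemma chosen_defect_le:
  assumes n: "n \<ge> 1"
  shows "chosen_defect n \<le>
    8 * (real n powr (3/4) + 1) / (real n + 1) + sqrt (8 / (1 + (real n powr (3/4) - 1) / sqrt n))"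
proof -
  define p where "p = real n powr (3/4)"
  define t where "t = nat \<lfloor>p\<rfloor>"
  define w where "w = 1 / sqrt (real n)"
  have p: "1 \<le> p" "p - 1 \<le> real t" "real t \<le> p"
    using n by (auto simp: p_def t_def ge_one_powr_ge_zero)
  have sn: "0 < sqrt (real n)" and w2: "w\<^sup>2 = 1 / real n"
    using n by (auto simp: w_def power_divide)
  have "(1 + w\<^sup>2 / 4) ^ n \<le> exp (w\<^sup>2 / 4) ^ n"
    by (intro power_mono exp_ge_add_one_self) (simp add: w2)
  also have "\<dots> = exp (1/4)"
    using n by (simp flip: exp_of_nat_mult add: w2)
  also have "\<dots> \<le> exp (1/2)"
    by simp
  also have "\<dots> \<le> 2"
    by (rule exp_half_le2)
  finally have e: "(1 + w\<^sup>2 / 4) ^ n \<le> 2" .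
  have d: "0 < 1 + (p - 1) / sqrt n" "1 + (p - 1) / sqrt n \<le> 1 + real t * w"
    using p sn by (auto simp: w_def divide_right_mono add_pos_nonneg)
  have "4 * (1 + w\<^sup>2 / 4) ^ n / (1 + real t * w) \<le> 8 / (1 + (p - 1) / sqrt n)"
    using e d by (intro frac_le) auto
  then have "sqrt (4 * (1 + w\<^sup>2 / 4) ^ n / (1 + real t * w)) \<le> sqrt (8 / (1 + (p - 1) / sqrt n))"
    by (rule real_sqrt_le_mono)
  moreover have "8 * (real t + 1) / (real n + 1) \<le> 8 * (p + 1) / (real n + 1)"
    using p by (intro divide_right_mono) auto
  moreover have "chosen_defect n =
      8 * (real t + 1) / (real n + 1) + sqrt (4 * (1 + w\<^sup>2 / 4) ^ n / (1 + real t * w))"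
    by (simp only: chosen_defect_def defect_def p_def t_def w_def)
  ultimately show ?thesis
    unfolding p_def by linarith
qed

lemma chosen_defect_tendsto_zero: "chosen_defect \<longlonglongrightarrow> 0"
proof (rule tendsto_sandwich)
  show "eventually (\<lambda>n. 0 \<le> chosen_defect n) sequentially"
    by (simp add: chosen_defect_def defect_def)
  show "eventually (\<lambda>n. chosen_defect n \<le>
      8 * (real n powr (3/4) + 1) / (real n + 1) + sqrt (8 / (1 + (real n powr (3/4) - 1) / sqrt n)))
      sequentially"
    using eventually_ge_at_top[of 1] by eventually_elim (rule chosen_defect_le)
  show "(\<lambda>n. 8 * (real n powr (3/4) + 1) / (real n + 1) +
      sqrt (8 / (1 + (real n powr (3/4) - 1) / sqrt n))) \<longlonglongrightarrow> 0"
    by real_asymp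
qed simp

lemma trifferent_code_card_le:
  assumes "trifferent_code n C"
  shows "real (card C) * (2 - chosen_defect n) \<le> 2 * (3/2) ^ n"
proof -
  interpret trifferent_family "{0..<n}" C
    by (rule trifferent_code_imp_family[OF assms])
  have "1 / sqrt (real n) \<le> 1"
    by (cases n) (auto simp: divide_le_eq)
  then show ?thesis
    using card_mult_defect_le[of "1 / sqrt n" "nat \<lfloor>real n powr (3/4)\<rfloor>"]
    by (simp add: chosen_defect_def)
qed

theorem proposition2:
  "\<forall>\<epsilon>::real. \<epsilon> > 0 \<longrightarrow> (\<exists>N::nat. \<forall>n\<ge>N. \<forall>C. trifferent_code n C \<longrightarrow>
      real (card C) \<le> (1 + \<epsilon>) * (3/2) ^ n)"
proof (intro allI impI)
  fix \<epsilon> :: real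
  assume \<epsilon>: "\<epsilon> > 0"
  then have "eventually (\<lambda>n. chosen_defect n < 2 * \<epsilon> / (1 + \<epsilon>)) sequentially"
    using chosen_defect_tendsto_zero by (intro order_tendstoD(2)) auto
  then obtain N where N: "\<And>n. n \<ge> N \<Longrightarrow> chosen_defect n < 2 * \<epsilon> / (1 + \<epsilon>)"
    by (auto simp: eventually_sequentially)
  show "\<exists>N. \<forall>n\<ge>N. \<forall>C. trifferent_code n C \<longrightarrow> real (card C) \<le> (1 + \<epsilon>) * (3/2) ^ n"
  proof (intro exI allI impI)
    fix n C
    assume "N \<le> n" "trifferent_code n C"
    have "2 / (1 + \<epsilon>) \<le> 2 - chosen_defect n"
      using N[OF \<open>N \<le> n\<close>] \<epsilon> by (simp add: field_simps)
    then have "real (card C) * (2 / (1 + \<epsilon>)) \<le> 2 * (3/2) ^ n"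
      using trifferent_code_card_le[OF \<open>trifferent_code n C\<close>]
      by (meson mult_left_mono of_nat_0_le_iff order_trans)
    then show "real (card C) \<le> (1 + \<epsilon>) * (3/2) ^ n"
      using \<epsilon> by (simp add: field_simps)
  qed
qed

end
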